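(* Assume X uses a memory-one strategy $\mathbf p$ that is generous and of Nash type. Assume Y uses a memory-one strategy $\mathbf q$ of Nash type such that either (i) $\mathbf q$ is generous, or (ii) $q_3+q_4>0$. Then $\{cc\}$ is the unique terminal set of the associated Markov matrix $\mathbf M$; in particular $\mathbf M$ has a unique stationary distribution.
   Context: Iterated Prisoner's Dilemma: payoffs $T>R>P>S$ with $2R>T+S$; outcomes of a round are ordered $cc,cd,dc,dd$ (first letter X's play, second Y's; $c$ = cooperate, $d$ = defect); payoff vectors $\mathbf S_X=(R,S,T,P)$, $\mathbf S_Y=(R,T,S,P)$. A memory-one strategy for X is $\mathbf p=(p_1,p_2,p_3,p_4)\in[0,1]^4$, $p_i$ the probability X plays $c$ after the $i$-th outcome. A memory-one strategy for Y is $\mathbf q=(q_1,\dots,q_4)\in[0,1]^4$, with $q_1,q_2,q_3,q_4$ the probabilities Y plays $c$ after outcomes $cc,dc,cd,dd$ respectively. The associated Markov matrix on the states $cc,cd,dc,dd$ has rows $(p_iq'_i,\ p_i(1-q'_i),\ (1-p_i)q'_i,\ (1-p_i)(1-q'_i))$, $i=1,\dots,4$, where $(q'_1,q'_2,q'_3,q'_4)=(q_1,q_3,q_2,q_4)$. A terminal set is a minimal nonempty set of states that no path of positive-probability transitions leaves. A strategy is agreeable if its first entry is $1$, and generous if its second and fourth entries are positive. For a strategy pattern of Y (any rule, possibly history-dependent and random) a limit distribution is a limit point $\mathbf v$ of the Cesàro averages of the round-$n$ outcome distributions, with payoffs $s_X=\langle\mathbf v\cdot\mathbf S_X\rangle$,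 $s_Y=\langle\mathbf v\cdot\mathbf S_Y\rangle$. A strategy for X is of Nash type if it is agreeable and, for every strategy pattern of the opponent and every associated limit distribution, $s_Y\ge R$ implies $s_Y=R$; the same definition is applied to Y's strategy with the roles of X and Y exchanged. *)

theory Defs
  imports Complex_Main
begin

text \<open>States (outcomes of a round) are coded 1 = cc, 2 = cd, 3 = dc, 4 = dd
  (first letter X's play, second Y's play).  Strategy vectors are functions
  nat => real of which only the entries 1..4 matter.\<close>

definition states :: "nat set" where "states = {1..4}"

definition x_coop :: "nat \<Rightarrow> bool" where "x_coop s \<longleftrightarrow> s = 1 \<or> s = 2"
definition y_coop :: "nat \<Rightarrow> bool" where "y_coop s \<longleftrightarrow> s = 1 \<or> s = 3"

definition is_strategy :: "(nat \<Rightarrow> real) \<Rightarrow> bool" where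
  "is_strategy p \<longleftrightarrow> (\<forall>i\<in>states. 0 \<le> p i \<and> p i \<le> 1)"

text \<open>Y's vector (q1,q2,q3,q4) refers to outcomes cc,dc,cd,dd; q' = (q1,q3,q2,q4).\<close>
definition qprime :: "(nat \<Rightarrow> real) \<Rightarrow> nat \<Rightarrow> real" where
  "qprime q i = (if i = 2 then q 3 else if i = 3 then q 2 else q i)"

definition markov :: "(nat \<Rightarrow> real) \<Rightarrow> (nat \<Rightarrow> real) \<Rightarrow> nat \<Rightarrow> nat \<Rightarrow> real" where
  "markov p q i j =
     (if x_coop j then p i else 1 - p i) * (if y_coop j then qprime q i else 1 - qprime q i)"

definition closed_set :: "(nat \<Rightarrow> nat \<Rightarrow> real) \<Rightarrow> nat set \<Rightarrow> bool" where
  "closed_set M A \<longleftrightarrow> (\<forall>i\<in>A. \<forall>j\<in>states. M i j > 0 \<longrightarrow> j \<in> A)"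

definition terminal_set :: "(nat \<Rightarrow> nat \<Rightarrow> real) \<Rightarrow> nat set \<Rightarrow> bool" where
  "terminal_set M A \<longleftrightarrow> A \<noteq> {} \<and> A \<subseteq> states \<and> closed_set M A \<and>
     (\<forall>B. B \<noteq> {} \<longrightarrow> B \<subseteq> A \<longrightarrow> closed_set M B \<longrightarrow> B = A)"

definition stationary :: "(nat \<Rightarrow> nat \<Rightarrow> real) \<Rightarrow> (nat \<Rightarrow> real) \<Rightarrow> bool" where
  "stationary M v \<longleftrightarrow> (\<forall>i\<in>states. v i \<ge> 0) \<and> (\<Sum>i\<in>states. v i) = 1 \<and>
     (\<forall>j\<in>states. (\<Sum>i\<in>states. v i * M i j) = v j)"

definition agreeable :: "(nat \<Rightarrow> real) \<Rightarrow> bool" where "agreeable p \<longleftrightarrow> p 1 = 1"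
definition generous :: "(nat \<Rightarrow> real) \<Rightarrow> bool" where "generous p \<longleftrightarrow> p 2 > 0 \<and> p 4 > 0"

text \<open>Strategy patterns: behaviour strategies, giving the probability of playing c
  as a function of the history of past outcomes (most recent outcome first).\<close>
definition is_pattern :: "(nat list \<Rightarrow> real) \<Rightarrow> bool" where
  "is_pattern \<sigma> \<longleftrightarrow> (\<forall>h. 0 \<le> \<sigma> h \<and> \<sigma> h \<le> 1)"

fun hist_prob :: "(nat list \<Rightarrow> real) \<Rightarrow> (nat list \<Rightarrow> real) \<Rightarrow> nat list \<Rightarrow> real" where
  "hist_prob sx sy [] = 1"
| "hist_prob sx sy (s # h) = hist_prob sx sy h *
     (if x_coop s then sx h else 1 - sx h) * (if y_coop s then sy h else 1 - sy h)"

text \<open>Distribution of the outcome of round n (n = 0 is the first round).\<close>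
definition round_dist :: "(nat list \<Rightarrow> real) \<Rightarrow> (nat list \<Rightarrow> real) \<Rightarrow> nat \<Rightarrow> nat \<Rightarrow> real" where
  "round_dist sx sy n s = (\<Sum>h\<in>{h. set h \<subseteq> states \<and> length h = n}. hist_prob sx sy (s # h))"

definition cesaro :: "(nat list \<Rightarrow> real) \<Rightarrow> (nat list \<Rightarrow> real) \<Rightarrow> nat \<Rightarrow> nat \<Rightarrow> real" where
  "cesaro sx sy n s = (\<Sum>k<Suc n. round_dist sx sy k s) / real (Suc n)"

definition limit_dist :: "(nat list \<Rightarrow> real) \<Rightarrow> (nat list \<Rightarrow> real) \<Rightarrow> (nat \<Rightarrow> real) \<Rightarrow> bool" where
  "limit_dist sx sy v \<longleftrightarrow> (\<exists>r. strict_mono r \<and>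
      (\<forall>s\<in>states. (\<lambda>n. cesaro sx sy (r n) s) \<longlonglongrightarrow> v s))"

definition memX :: "real \<Rightarrow> (nat \<Rightarrow> real) \<Rightarrow> nat list \<Rightarrow> real" where
  "memX p0 p h = (if h = [] then p0 else p (hd h))"
definition memY :: "real \<Rightarrow> (nat \<Rightarrow> real) \<Rightarrow> nat list \<Rightarrow> real" where
  "memY q0 q h = (if h = [] then q0 else qprime q (hd h))"

definition payX :: "real \<Rightarrow> real \<Rightarrow> real \<Rightarrow> real \<Rightarrow> (nat \<Rightarrow> real) \<Rightarrow> real" where
  "payX T R P S v = v 1 * R + v 2 * S + v 3 * T + v 4 * P"
definition payY :: "real \<Rightarrow> real \<Rightarrow> real \<Rightarrow> real \<Rightarrow> (nat \<Rightarrow> real) \<Rightarrow> real" where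
  "payY T R P S v = v 1 * R + v 2 * T + v 3 * S + v 4 * P"

definition nash_X :: "real \<Rightarrow> real \<Rightarrow> real \<Rightarrow> real \<Rightarrow> (nat \<Rightarrow> real) \<Rightarrow> bool" where
  "nash_X T R P S p \<longleftrightarrow> agreeable p \<and>
     (\<forall>p0 sy v. 0 \<le> p0 \<and> p0 \<le> 1 \<longrightarrow> is_pattern sy \<longrightarrow> limit_dist (memX p0 p) sy v \<longrightarrow>
        payY T R P S v \<ge> R \<longrightarrow> payY T R P S v = R)"

definition nash_Y :: "real \<Rightarrow> real \<Rightarrow> real \<Rightarrow> real \<Rightarrow> (nat \<Rightarrow> real) \<Rightarrow> bool" where
  "nash_Y T R P S q \<longleftrightarrow> agreeable q \<and>
     (\<forall>q0 sx v. 0 \<le> q0 \<and> q0 \<le> 1 \<longrightarrow> is_pattern sx \<longrightarrow> limit_dist sx (memY q0 q) v \<longrightarrow>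
        payX T R P S v \<ge> R \<longrightarrow> payX T R P S v = R)"

end

theory Submission
  imports Defs
begin

text \<open>A Nash strategy cannot answer cd by cooperating for sure, since an opponent who
  always defects would then earn T > R; symmetrically q2 < 1.  Together with generosity
  of p and q3 + q4 > 0 this makes cc reachable from every state, and cc is absorbing
  because both strategies are agreeable.  A chain in which some absorbing state is
  reachable from every closed set has that state as its only terminal set, and the point
  mass there is its only stationary distribution: a stationary v sends no mass into the
  absorbing state, so the rest of its support is closed, hence empty.\<close>

lemma states_eq: "states = {1, 2, 3, 4}"
  by (auto simp: states_def)

lemma sum_states: "(\<Sum>i\<in>states. f i) = f 1 + f 2 + f 3 + f 4"
  for f :: "nat \<Rightarrow> 'a::comm_monoid_add"
  by (simp add: states_eq add.assoc)

lemma finite_states [simp]: "finite states"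
  by (simp add: states_def)

definition stochastic :: "(nat \<Rightarrow> nat \<Rightarrow> real) \<Rightarrow> bool" where
  "stochastic M \<longleftrightarrow> (\<forall>i\<in>states. (\<forall>j\<in>states. 0 \<le> M i j) \<and> (\<Sum>j\<in>states. M i j) = 1)"

lemma closed_setD: "closed_set M A \<Longrightarrow> i \<in> A \<Longrightarrow> j \<in> states \<Longrightarrow> M i j > 0 \<Longrightarrow> j \<in> A"
  by (auto simp: closed_set_def)

lemma closed_singleton_absorbing:
  assumes M: "stochastic M" and a: "a \<in> states" and cl: "closed_set M {a}"
  shows "M a a = 1"
proof -
  have "M a j = 0" if "j \<in> states - {a}" for j
    using M a cl that by (force simp: stochastic_def closed_set_def)
  then have "(\<Sum>j\<in>states. M a j) = M a a"
    using a by (simp add: sum.remove)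
  then show ?thesis
    using M a by (simp add: stochastic_def)
qed

lemma terminal_set_iff_absorbing:
  assumes a: "a \<in> states" and cl: "closed_set M {a}"
    and reach: "\<And>B. B \<noteq> {} \<Longrightarrow> B \<subseteq> states \<Longrightarrow> closed_set M B \<Longrightarrow> a \<in> B"
  shows "terminal_set M A \<longleftrightarrow> A = {a}"
proof
  assume "terminal_set M A"
  then show "A = {a}"
    using reach[of A] cl unfolding terminal_set_def by blast
qed (use a cl reach in \<open>auto simp: terminal_set_def\<close>)

lemma stationary_point_mass:
  assumes M: "stochastic M" and a: "a \<in> states" and cl: "closed_set M {a}"
  shows "stationary M (\<lambda>i. if i = a then 1 else 0)"
  unfolding stationary_def
proof (intro conjI ballI)
  fix j assume j: "j \<in> states"
  have "M a j = (if j = a then 1 else 0)"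
    using closed_singleton_absorbing[OF assms] M a cl j
    by (force simp: stochastic_def closed_set_def)
  moreover have "(\<Sum>i\<in>states. (if i = a then 1 else 0) * M i j)
      = (\<Sum>i\<in>states. if i = a then M a j else 0)"
    by (rule sum.cong) auto
  ultimately show "(\<Sum>i\<in>states. (if i = a then 1 else 0) * M i j) = (if j = a then 1 else 0)"
    using a by auto
qed (use a in auto)

lemma stationary_no_inflow:
  assumes M: "stochastic M" and a: "a \<in> states" and cl: "closed_set M {a}"
    and v: "stationary M v" and k: "k \<in> states" "k \<noteq> a"
  shows "v k * M k a = 0"
proof -
  have nonneg: "\<forall>i\<in>states - {a}. 0 \<le> v i * M i a"
    using M a v by (simp add: stochastic_def stationary_def)
  have "v a = (\<Sum>i\<in>states. v i * M i a)"
    using v a by (simp add: stationary_def)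
  also have "\<dots> = v a + (\<Sum>i\<in>states - {a}. v i * M i a)"
    using a closed_singleton_absorbing[OF M a cl] by (simp add: sum.remove)
  finally have "(\<Sum>i\<in>states - {a}. v i * M i a) = 0"
    by simp
  then have "\<forall>i\<in>states - {a}. v i * M i a = 0"
    using nonneg by (simp only: sum_nonneg_eq_0_iff finite_Diff finite_states)
  then show ?thesis
    using k by blast
qed

lemma stationary_support_closed:
  assumes M: "stochastic M" and a: "a \<in> states" and cl: "closed_set M {a}"
    and v: "stationary M v"
  shows "closed_set M {k \<in> states. k \<noteq> a \<and> v k > 0}"
  unfolding closed_set_def
proof (intro ballI impI)
  fix k j assume k: "k \<in> {k \<in> states. k \<noteq> a \<and> v k > 0}" and j: "j \<in> states"
    and Mkj: "M k j > 0"
  have "M k a = 0"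
    using stationary_no_inflow[OF M a cl v] k by fastforce
  with Mkj have "j \<noteq> a" by auto
  have "0 < v k * M k j"
    using k Mkj by simp
  also have "\<dots> \<le> (\<Sum>i\<in>states. v i * M i j)"
    using M v j k by (intro member_le_sum) (auto simp: stochastic_def stationary_def)
  also have "\<dots> = v j"
    using v j by (simp add: stationary_def)
  finally show "j \<in> {k \<in> states. k \<noteq> a \<and> v k > 0}"
    using j \<open>j \<noteq> a\<close> by simp
qed

lemma stationary_eq_point_mass:
  assumes M: "stochastic M" and a: "a \<in> states" and cl: "closed_set M {a}"
    and reach: "\<And>B. B \<noteq> {} \<Longrightarrow> B \<subseteq> states \<Longrightarrow> closed_set M B \<Longrightarrow> a \<in> B"
    and v: "stationary M v" and i: "i \<in> states"
  shows "v i = (if i = a then 1 else 0)"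
proof -
  have "{k \<in> states. k \<noteq> a \<and> v k > 0} = {}"
    using reach[OF _ _ stationary_support_closed[OF M a cl v]] by blast
  then have off: "v k = 0" if "k \<in> states - {a}" for k
    using v that by (force simp: stationary_def)
  have "1 = (\<Sum>k\<in>states. v k)"
    using v by (simp add: stationary_def)
  also have "\<dots> = v a"
    using a off by (simp add: sum.remove)
  finally show ?thesis
    using off i by auto
qed

lemma state_eqI:
  "s \<in> states \<Longrightarrow> t \<in> states \<Longrightarrow> x_coop s = x_coop t \<Longrightarrow> y_coop s = y_coop t \<Longrightarrow> s = t"
  by (auto simp: states_def x_coop_def y_coop_def)

locale constant_play =
  fixes sx sy :: "nat list \<Rightarrow> real" and s :: nat
  assumes s: "s \<in> states"
    and sx: "\<And>n. sx (replicate n s) = (if x_coop s then 1 else 0)"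
    and sy: "\<And>n. sy (replicate n s) = (if y_coop s then 1 else 0)"
begin

lemma hist_prob_eq:
  "set h \<subseteq> states \<Longrightarrow> hist_prob sx sy h = (if h = replicate (length h) s then 1 else 0)"
proof (induction h)
  case (Cons t h)
  then have t: "t \<in> states" and IH: "hist_prob sx sy h = (if h = replicate (length h) s then 1 else 0)"
    by auto
  show ?case
  proof (cases "h = replicate (length h) s")
    case True
    have "(t = s) = (x_coop t = x_coop s \<and> y_coop t = y_coop s)"
      using state_eqI[OF t s] by auto
    then show ?thesis
      using IH True sx[of "length h"] sy[of "length h"] by (auto simp: replicate_Suc[symmetric])
  next
    case False
    then show ?thesis
      using IH by auto
  qed
qed simp

lemma round_dist_eq:
  assumes t: "t \<in> states"
  shows "round_dist sx sy n t = (if t = s then 1 else 0)"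
proof -
  let ?H = "{h. set h \<subseteq> states \<and> length h = n}"
  have "round_dist sx sy n t = (\<Sum>h\<in>?H. if h = replicate n s then (if t = s then 1 else 0) else 0)"
    unfolding round_dist_def using t
    by (intro sum.cong refl) (auto simp: hist_prob_eq simp del: hist_prob.simps)
  also have "\<dots> = (if t = s then 1 else 0)"
    using s by (simp add: finite_lists_length_eq set_replicate_conv_if)
  finally show ?thesis .
qed

lemma limit_dist_point_mass: "limit_dist sx sy (\<lambda>t. if t = s then 1 else 0)"
proof -
  have "cesaro sx sy n t = (if t = s then 1 else 0)" if "t \<in> states" for n t
    using that by (simp add: cesaro_def round_dist_eq)
  then show ?thesis
    unfolding limit_dist_def by (intro exI[of _ id]) (simp add: strict_mono_id)
qed

end

lemma nash_XD:
  "nash_X T R P S p \<Longrightarrow> 0 \<le> p0 \<Longrightarrow> p0 \<le> 1 \<Longrightarrow> is_pattern sy \<Longrightarrow>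
    limit_dist (memX p0 p) sy v \<Longrightarrow> R \<le> payY T R P S v \<Longrightarrow> payY T R P S v = R"
  by (simp add: nash_X_def)

lemma nash_YD:
  "nash_Y T R P S q \<Longrightarrow> 0 \<le> q0 \<Longrightarrow> q0 \<le> 1 \<Longrightarrow> is_pattern sx \<Longrightarrow>
    limit_dist sx (memY q0 q) v \<Longrightarrow> R \<le> payX T R P S v \<Longrightarrow> payX T R P S v = R"
  by (simp add: nash_Y_def)

lemma nash_X_p2_less_1:
  assumes "T > R" "nash_X T R P S p" "is_strategy p"
  shows "p 2 < 1"
proof -
  have "p 2 \<noteq> 1"
  proof
    assume p2: "p 2 = 1"
    let ?v = "\<lambda>t::nat. if t = 2 then 1 else 0 :: real"
    have "memX 1 p (replicate n 2) = 1" for n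
      using p2 by (cases n) (auto simp: memX_def)
    then interpret constant_play "memX 1 p" "\<lambda>_. 0" 2
      by unfold_locales (auto simp: states_def x_coop_def y_coop_def)
    have "payY T R P S ?v = T"
      by (simp add: payY_def)
    moreover have "is_pattern (\<lambda>_. 0)"
      by (simp add: is_pattern_def)
    ultimately show False
      using nash_XD[OF assms(2) _ _ _ limit_dist_point_mass] assms(1) by simp
  qed
  moreover have "p 2 \<le> 1"
    using assms(3) by (simp add: is_strategy_def states_def)
  ultimately show ?thesis
    by simp
qed

lemma nash_Y_q2_less_1:
  assumes "T > R" "nash_Y T R P S q" "is_strategy q"
  shows "q 2 < 1"
proof -
  have "q 2 \<noteq> 1"
  proof
    assume q2: "q 2 = 1"
    let ?v = "\<lambda>t::nat. if t = 3 then 1 else 0 :: real"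
    have "memY 1 q (replicate n 3) = 1" for n
      using q2 by (cases n) (auto simp: memY_def qprime_def)
    then interpret constant_play "\<lambda>_. 0" "memY 1 q" 3
      by unfold_locales (auto simp: states_def x_coop_def y_coop_def)
    have "payX T R P S ?v = T"
      by (simp add: payX_def)
    moreover have "is_pattern (\<lambda>_. 0)"
      by (simp add: is_pattern_def)
    ultimately show False
      using nash_YD[OF assms(2) _ _ _ limit_dist_point_mass] assms(1) by simp
  qed
  moreover have "q 2 \<le> 1"
    using assms(3) by (simp add: is_strategy_def states_def)
  ultimately show ?thesis
    by simp
qed

lemma markov_simps:
  "markov p q i 1 = p i * qprime q i" "markov p q i 2 = p i * (1 - qprime q i)"
  "markov p q i 3 = (1 - p i) * qprime q i" "markov p q i 4 = (1 - p i) * (1 - qprime q i)"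
  "markov p q i (Suc 0) = p i * qprime q i"
  by (simp_all add: markov_def x_coop_def y_coop_def)

lemma qprime_simps:
  "qprime q 1 = q 1" "qprime q 2 = q 3" "qprime q 3 = q 2" "qprime q 4 = q 4"
  "qprime q (Suc 0) = q (Suc 0)"
  by (simp_all add: qprime_def)

lemma stochastic_markov:
  assumes p: "is_strategy p" and q: "is_strategy q"
  shows "stochastic (markov p q)"
  unfolding stochastic_def
proof (intro ballI conjI)
  fix i j assume i: "i \<in> states" and "j \<in> states"
  have "0 \<le> qprime q i" "qprime q i \<le> 1"
    using q i by (auto simp: is_strategy_def qprime_def states_def)
  moreover have "0 \<le> p i" "p i \<le> 1"
    using p i by (auto simp: is_strategy_def)
  ultimately show "0 \<le> markov p q i j"
    by (simp add: markov_def)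
next
  fix i show "(\<Sum>j\<in>states. markov p q i j) = 1"
    by (simp add: sum_states markov_simps algebra_simps)
qed

lemma closed_cc_markov:
  assumes "p 1 = 1" "q 1 = 1"
  shows "closed_set (markov p q) {1}"
  using assms by (auto simp: closed_set_def states_eq markov_simps qprime_simps)

lemma markov_closed_set_contains_cc:
  assumes "is_strategy p" "is_strategy q"
    and p2: "0 < p 2" "p 2 < 1" and p4: "p 4 > 0" and q2: "q 2 < 1" and q34: "q 3 + q 4 > 0"
    and cl: "closed_set (markov p q) B" and sub: "B \<subseteq> states" and ne: "B \<noteq> {}"
  shows "1 \<in> B"
proof -
  have nonneg: "0 \<le> p 3" "0 \<le> q 3" "0 \<le> q 4"
    using assms(1,2) by (auto simp: is_strategy_def states_def)
  have step: "\<lbrakk>i \<in> B; markov p q i j > 0; j \<in> {1, 2, 3, 4}\<rbrakk> \<Longrightarrow> j \<in> B" for i j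
    using closed_setD[OF cl] by (auto simp: states_eq)
  have from4_to_2: "1 \<in> B \<or> 2 \<in> B" if "4 \<in> B"
    using step[OF that, of 1] step[OF that, of 2] p4 nonneg(3)
    by (cases "q 4 > 0") (auto simp: markov_simps qprime_simps)
  have from2: "1 \<in> B" if "2 \<in> B"
  proof (cases "q 3 > 0")
    case True
    then show ?thesis
      using step[OF that, of 1] p2 by (simp add: markov_simps qprime_simps)
  next
    case False
    then have "q 3 = 0" "q 4 > 0"
      using nonneg q34 by linarith+
    then have "4 \<in> B"
      using step[OF that, of 4] p2 by (simp add: markov_simps qprime_simps)
    then show ?thesis
      using step[of 4 1] p4 \<open>q 4 > 0\<close> by (simp add: markov_simps qprime_simps)
  qed
  have from4: "1 \<in> B" if "4 \<in> B"
    using from4_to_2[OF that] from2 by blast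
  have from3: "1 \<in> B" if "3 \<in> B"
    using step[OF that, of 2] step[OF that, of 4] q2 nonneg(1) from2 from4
    by (cases "p 3 > 0") (auto simp: markov_simps qprime_simps)
  obtain i where "i \<in> B"
    using ne by blast
  then show ?thesis
    using sub from2 from3 from4 by (auto simp: states_eq)
qed

theorem proposition2p7:
  fixes T R P S :: real and p q :: "nat \<Rightarrow> real"
  assumes "T > R" "R > P" "P > S" "2 * R > T + S"
    and "is_strategy p" "is_strategy q"
    and "generous p" "nash_X T R P S p"
    and "nash_Y T R P S q"
    and "generous q \<or> q 3 + q 4 > 0"
  shows "(\<forall>A. terminal_set (markov p q) A \<longleftrightarrow> A = {1})
    \<and> (\<exists>v. stationary (markov p q) v)
    \<and> (\<forall>v w. stationary (markov p q) v \<longrightarrow> stationary (markov p q) w \<longrightarrow>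
          (\<forall>i\<in>states. v i = w i))"
proof -
  have cc: "1 \<in> states"
    by (simp add: states_def)
  have "p 1 = 1" "q 1 = 1"
    using assms(8,9) by (simp_all add: nash_X_def nash_Y_def agreeable_def)
  then have absorbing: "closed_set (markov p q) {1}"
    by (rule closed_cc_markov)
  have "q 3 \<ge> 0"
    using assms(6) by (simp add: is_strategy_def states_def)
  then have "q 3 + q 4 > 0"
    using assms(10) by (auto simp: generous_def)
  then have reach: "\<And>B. B \<noteq> {} \<Longrightarrow> B \<subseteq> states \<Longrightarrow> closed_set (markov p q) B \<Longrightarrow> 1 \<in> B"
    using markov_closed_set_contains_cc[OF assms(5,6)] assms(7)
      nash_X_p2_less_1[OF assms(1,8,5)] nash_Y_q2_less_1[OF assms(1,9,6)]
    by (simp add: generous_def)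
  note M = stochastic_markov[OF assms(5,6)]
  show ?thesis
  proof (intro conjI allI impI ballI)
    show "terminal_set (markov p q) A \<longleftrightarrow> A = {1}" for A
      by (rule terminal_set_iff_absorbing[OF cc absorbing reach])
    show "\<exists>v. stationary (markov p q) v"
      using stationary_point_mass[OF M cc absorbing] by blast
    show "v i = w i" if "stationary (markov p q) v" "stationary (markov p q) w" "i \<in> states"
      for v w i
      using that stationary_eq_point_mass[OF M cc absorbing reach, of v i]
        stationary_eq_point_mass[OF M cc absorbing reach, of w i]
      by simp
  qed
qed

end
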